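(* Let $\mathcal M_1(\mathbb R^d)$ be the space of finite signed Borel measures $\mu$ on $\mathbb R^d$ with $\int|x|\,\mathrm d|\mu|(x)<\infty$, with the norm $\|\mu\|_{\mathcal W_1}:=\sup\{|\int f\,\mathrm d\mu|: |f(0)|\le1,\ f\text{ is }1\text{-Lipschitz}\}$. Let $$C:=\Big\{\mu\in\mathcal M_1(\mathbb R^d):\int f\,\mathrm d\mu\ge0\text{ for all nonnegative 1-Lipschitz increasing }f\colon\mathbb R^d\to\mathbb R\Big\}.$$ Then $C$ is a cone in $(\mathcal M_1(\mathbb R^d),\|\cdot\|_{\mathcal W_1})$: it is closed and convex, $\lambda C\subset C$ for all $\lambda>0$, and $C\cap(-C)=\{0\}$. Moreover, for $\mu,\nu\in\mathcal P_1(\mathbb R^d)$, $\mu\le_{\mathrm{st}}\nu$ if and only if $\nu-\mu\in C$.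
   Context: Coordinate order on $\mathbb R^d$; $f$ is increasing if $x\le y$ implies $f(x)\le f(y)$; $1$-Lipschitz means $|f(x)-f(y)|\le|x-y|$. $\mathcal P_1(\mathbb R^d)$ is the set of probability measures with finite first moment. Stochastic order: $\mu\le_{\mathrm{st}}\nu$ iff $\int f\mathrm d\mu\le\int f\mathrm d\nu$ for all bounded increasing $f$. $(\mathcal M_1(\mathbb R^d),\|\cdot\|_{\mathcal W_1})$ is a normed vector space. *)

theory Defs
  imports "HOL-Probability.Probability"
begin

text \<open>Finite signed Borel measures on real^'n are represented as real-valued set
functions (defined on all sets, equal to 0 on non-Borel sets).\<close>

definition fm1 :: "(real^'n) measure \<Rightarrow> bool" where
  "fm1 M \<longleftrightarrow> finite_measure M \<and> sets M = sets (borel :: (real^'n) measure)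
      \<and> integrable M (\<lambda>x. norm x)"

definition sm_decomp :: "((real^'n) set \<Rightarrow> real) \<Rightarrow> (real^'n) measure \<Rightarrow> (real^'n) measure \<Rightarrow> bool" where
  "sm_decomp \<mu> M N \<longleftrightarrow> fm1 M \<and> fm1 N \<and>
     (\<forall>A. \<mu> A = (if A \<in> sets (borel :: (real^'n) measure) then measure M A - measure N A else 0))"

definition M1 :: "((real^'n) set \<Rightarrow> real) set" where
  "M1 = {\<mu>. \<exists>M N. sm_decomp \<mu> M N}"

text \<open>Integral against a signed measure (independent of the chosen decomposition
for integrable f, in particular for Lipschitz f).\<close>
definition sm_integral :: "((real^'n) set \<Rightarrow> real) \<Rightarrow> (real^'n \<Rightarrow> real) \<Rightarrow> real" where
  "sm_integral \<mu> f = (SOME r. \<exists>M N. sm_decomp \<mu> M N \<and>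
      r = (\<integral>x. f x \<partial>M) - (\<integral>x. f x \<partial>N))"

definition lip1 :: "(real^'n \<Rightarrow> real) \<Rightarrow> bool" where
  "lip1 f \<longleftrightarrow> (\<forall>x y. \<bar>f x - f y\<bar> \<le> dist x y)"

definition W1norm :: "((real^'n) set \<Rightarrow> real) \<Rightarrow> real" where
  "W1norm \<mu> = Sup {\<bar>sm_integral \<mu> f\<bar> | f. \<bar>f 0\<bar> \<le> 1 \<and> lip1 f}"

text \<open>Coordinatewise order on real^'n is the library order on vec; increasing = mono.\<close>
definition coneC :: "((real^'n) set \<Rightarrow> real) set" where
  "coneC = {\<mu> \<in> M1. \<forall>f. lip1 f \<and> (\<forall>x. 0 \<le> f x) \<and> mono f \<longrightarrow> 0 \<le> sm_integral \<mu> f}"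

definition P1 :: "(real^'n) measure \<Rightarrow> bool" where
  "P1 M \<longleftrightarrow> prob_space M \<and> sets M = sets (borel :: (real^'n) measure)
      \<and> integrable M (\<lambda>x. norm x)"

definition st_le :: "(real^'n) measure \<Rightarrow> (real^'n) measure \<Rightarrow> bool" where
  "st_le \<mu> \<nu> \<longleftrightarrow> (\<forall>f :: real^'n \<Rightarrow> real. f \<in> borel_measurable borel \<and> bounded (range f) \<and> mono f
      \<longrightarrow> (\<integral>x. f x \<partial>\<mu>) \<le> (\<integral>x. f x \<partial>\<nu>))"

definition sm_of :: "(real^'n) measure \<Rightarrow> (real^'n) set \<Rightarrow> real" where
  "sm_of M = (\<lambda>A. if A \<in> sets (borel :: (real^'n) measure) then measure M A else 0)"

end

theory Submission
  imports Defs
begin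

text \<open>
  Every \<open>\<mu> \<in> M1\<close> is a difference \<open>M - N\<close> of finite measures with finite first moment, and
  the integral of a Lipschitz function against \<open>\<mu>\<close> does not depend on the decomposition,
  because \<open>M - N = M' - N'\<close> means \<open>M + N' = M' + N\<close>. So \<open>\<mu> \<mapsto> \<integral> f d\<mu>\<close> is linear and
  bounded by \<open>max 1 \<bar>f 0\<bar>\<close> times the \<open>W\<^sub>1\<close>-norm, which gives convexity, homogeneity and
  closedness of the cone.

  Pointedness and the characterisation of the stochastic order rest on the fact that the
  nonnegative increasing 1-Lipschitz functions control the measures of upper sets: for a closed
  upper set \<open>F\<close> the functions \<open>k \<cdot> max 0 (1/k - d(x, F))\<close> are multiples of such functions and tend to
  the indicator of \<open>F\<close>, and by inner regularity every Borel upper set is approximated from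
  inside by upward closures of compact sets, which are closed. Two finite measures agreeing on
  upper sets agree on the complements of lower orthants and are therefore equal. Conversely, a
  bounded increasing function is uniformly approximated by positive combinations of indicators
  of its upper level sets, so dominance on upper sets yields the stochastic order.
\<close>

section \<open>Sums of measures\<close>

definition add_measure :: "'a measure \<Rightarrow> 'a measure \<Rightarrow> 'a measure" where
  "add_measure M N = measure_of (space M) (sets M) (\<lambda>A. emeasure M A + emeasure N A)"

lemma sets_add_measure [simp]: "sets (add_measure M N) = sets M"
  by (simp add: add_measure_def)

lemma space_add_measure [simp]: "space (add_measure M N) = space M"
  by (simp add: add_measure_def)

lemma measurable_add_measure [simp]: "measurable (add_measure M N) X = measurable M X"
  by (rule measurable_cong_sets) simp_all

lemma emeasure_add_measure:
  assumes "sets N = sets M" and "A \<in> sets M"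
  shows "emeasure (add_measure M N) A = emeasure M A + emeasure N A"
  unfolding add_measure_def
proof (rule emeasure_measure_of_sigma)
  show "sigma_algebra (space M) (sets M)"
    by (rule sets.sigma_algebra_axioms)
  show "positive (sets M) (\<lambda>A. emeasure M A + emeasure N A)"
    by (simp add: positive_def)
  show "countably_additive (sets M) (\<lambda>A. emeasure M A + emeasure N A)"
    unfolding countably_additive_def
  proof safe
    fix F :: "nat \<Rightarrow> _"
    assume F: "range F \<subseteq> sets M" "disjoint_family F" "\<Union> (range F) \<in> sets M"
    have "(\<Sum>i. emeasure M (F i) + emeasure N (F i)) = (\<Sum>i. emeasure M (F i)) + (\<Sum>i. emeasure N (F i))"
      by (rule suminf_add[symmetric]) auto
    also have "\<dots> = emeasure M (\<Union> (range F)) + emeasure N (\<Union> (range F))"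
      using F assms by (simp add: suminf_emeasure)
    finally show "(\<Sum>i. emeasure M (F i) + emeasure N (F i)) =
        emeasure M (\<Union> (range F)) + emeasure N (\<Union> (range F))" .
  qed
qed fact

lemma nn_integral_add_measure:
  assumes N: "sets N = sets M" and f: "f \<in> borel_measurable M"
  shows "nn_integral (add_measure M N) f = nn_integral M f + nn_integral N f"
  using f
proof induction
  case (cong f g)
  have "space N = space M"
    using N sets_eq_imp_space_eq by blast
  with cong show ?case
    by (simp cong: nn_integral_cong_simp)
next
  case (set A)
  with N show ?case
    by (simp add: emeasure_add_measure)
next
  case (mult f c)
  with N show ?case
    by (simp add: nn_integral_cmult distrib_left measurable_cong_sets[OF N refl])
next
  case (add f g)
  with N show ?case
    by (simp add: nn_integral_add algebra_simps measurable_cong_sets[OF N refl])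
next
  case (seq U)
  have "(SUP i. integral\<^sup>N M (U i) + integral\<^sup>N N (U i)) =
      (SUP i. integral\<^sup>N M (U i)) + (SUP i. integral\<^sup>N N (U i))"
    using seq N by (intro ennreal_SUP_add incseq_nn_integral)
      (auto simp: measurable_cong_sets[OF N refl] le_fun_def incseq_def)
  with seq N show ?case
    by (simp add: nn_integral_monotone_convergence_SUP image_comp measurable_cong_sets[OF N refl])
qed

lemma measure_add_measure:
  assumes "finite_measure M" "finite_measure N" "sets N = sets M"
  shows "measure (add_measure M N) A = measure M A + measure N A"
proof (cases "A \<in> sets M")
  case True
  with assms have "emeasure (add_measure M N) A = ennreal (measure M A + measure N A)"
    by (simp add: emeasure_add_measure finite_measure.emeasure_eq_measure)
  then show ?thesis
    by (simp add: measure_eq_emeasure_eq_ennreal)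
next
  case False
  with assms show ?thesis
    by (simp add: measure_notin_sets)
qed

lemma integrable_add_measure:
  fixes f :: "'a \<Rightarrow> real"
  assumes N: "sets N = sets M" and "integrable M f" and "integrable N f"
  shows "integrable (add_measure M N) f"
proof -
  have "(\<integral>\<^sup>+ x. ennreal (norm (f x)) \<partial>add_measure M N) =
      (\<integral>\<^sup>+ x. ennreal (norm (f x)) \<partial>M) + (\<integral>\<^sup>+ x. ennreal (norm (f x)) \<partial>N)"
    using assms by (intro nn_integral_add_measure) auto
  also have "\<dots> < \<infinity>"
    using assms by (simp add: integrable_iff_bounded)
  moreover have "f \<in> borel_measurable M"
    using assms by simp
  ultimately show ?thesis
    by (simp add: integrable_iff_bounded)
qed

lemma integral_add_measure:
  fixes f :: "'a \<Rightarrow> real"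
  assumes N: "sets N = sets M" and fM: "integrable M f" and fN: "integrable N f"
  shows "integral\<^sup>L (add_measure M N) f = integral\<^sup>L M f + integral\<^sup>L N f"
proof -
  have f: "f \<in> borel_measurable M"
    using fM by simp
  have pos: "(\<integral>\<^sup>+ x. ennreal (f x) \<partial>add_measure M N) =
      (\<integral>\<^sup>+ x. ennreal (f x) \<partial>M) + (\<integral>\<^sup>+ x. ennreal (f x) \<partial>N)"
    and neg: "(\<integral>\<^sup>+ x. ennreal (- f x) \<partial>add_measure M N) =
      (\<integral>\<^sup>+ x. ennreal (- f x) \<partial>M) + (\<integral>\<^sup>+ x. ennreal (- f x) \<partial>N)"
    using f N by (intro nn_integral_add_measure; simp)+
  have finite: "(\<integral>\<^sup>+ x. ennreal (f x) \<partial>M) < \<infinity>" "(\<integral>\<^sup>+ x. ennreal (f x) \<partial>N) < \<infinity>"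
    "(\<integral>\<^sup>+ x. ennreal (- f x) \<partial>M) < \<infinity>" "(\<integral>\<^sup>+ x. ennreal (- f x) \<partial>N) < \<infinity>"
    using fM fN by (auto simp: real_integrable_def top.not_eq_extremum)
  show ?thesis
    unfolding real_lebesgue_integral_def[OF integrable_add_measure[OF assms]]
      real_lebesgue_integral_def[OF fM] real_lebesgue_integral_def[OF fN] pos neg
    using finite by (simp add: enn2real_plus)
qed

section \<open>Integration against signed measures\<close>

lemma fm1D:
  assumes "fm1 M"
  shows "finite_measure M" "sets M = sets borel" "space M = UNIV" "integrable M norm"
  using assms unfolding fm1_def by (auto dest: sets_eq_imp_space_eq)

lemma measurable_fm1: "fm1 M \<Longrightarrow> measurable M X = measurable borel X"
  by (rule measurable_cong_sets) (auto dest: fm1D)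

lemma fm1_add_measure:
  assumes "fm1 M" "fm1 N"
  shows "fm1 (add_measure M N)"
  unfolding fm1_def
proof (intro conjI)
  show "finite_measure (add_measure M N)"
    using assms by (intro finite_measureI) (simp add: emeasure_add_measure fm1D finite_measure.emeasure_finite)
  show "integrable (add_measure M N) norm"
    using assms by (intro integrable_add_measure) (simp_all add: fm1D)
qed (use assms in \<open>simp add: fm1D\<close>)

lemma fm1_density_const:
  assumes "fm1 M" "0 \<le> c"
  shows "fm1 (density M (\<lambda>_. ennreal c))"
  unfolding fm1_def
proof (intro conjI)
  show "finite_measure (density M (\<lambda>_. ennreal c))"
    using assms by (intro finite_measureI)
      (simp add: emeasure_density_const fm1D finite_measure.emeasure_finite ennreal_mult_eq_top_iff)
  show "integrable (density M (\<lambda>_. ennreal c)) norm"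
    using assms by (subst integrable_density) (auto simp: fm1D measurable_fm1)
qed (use assms in \<open>simp add: fm1D\<close>)

lemma integral_density_const:
  fixes f :: "'a \<Rightarrow> real"
  assumes "f \<in> borel_measurable M" "0 \<le> c"
  shows "integral\<^sup>L (density M (\<lambda>_. ennreal c)) f = c * integral\<^sup>L M f"
  using assms by (subst integral_density) auto

lemma lip1_abs_le: "lip1 f \<Longrightarrow> \<bar>f x\<bar> \<le> \<bar>f 0\<bar> + norm x"
  unfolding lip1_def by (smt (verit) dist_0_norm)

lemma lip1_continuous_on: "lip1 f \<Longrightarrow> continuous_on S f"
  unfolding lip1_def
  by (intro lipschitz_on_continuous_on[where L=1] lipschitz_onI) (auto simp: dist_real_def)

lemma borel_measurable_lip1: "lip1 f \<Longrightarrow> f \<in> borel_measurable borel"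
  by (intro borel_measurable_continuous_onI lip1_continuous_on)

lemma integrable_lip1:
  assumes M: "fm1 M" and f: "lip1 f"
  shows "integrable M f"
proof (rule Bochner_Integration.integrable_bound)
  interpret finite_measure M
    using M by (rule fm1D)
  show "integrable M (\<lambda>x. \<bar>f 0\<bar> + norm x)"
    using M by (simp add: fm1D)
  show "f \<in> borel_measurable M"
    using M f by (simp add: measurable_fm1 borel_measurable_lip1)
  show "AE x in M. norm (f x) \<le> norm (\<bar>f 0\<bar> + norm x)"
    using lip1_abs_le[OF f] by simp
qed

lemma integral_add_measure_lip1:
  assumes "fm1 M" "fm1 N" "lip1 f"
  shows "integral\<^sup>L (add_measure M N) f = integral\<^sup>L M f + integral\<^sup>L N f"
  using assms by (simp add: integral_add_measure integrable_lip1 fm1D)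

lemma sm_decomp_fm1: "sm_decomp \<mu> M N \<Longrightarrow> fm1 M \<and> fm1 N"
  by (simp add: sm_decomp_def)

lemma sm_decomp_add_measure_eq:
  assumes d: "sm_decomp \<mu> M N" and d': "sm_decomp \<mu> M' N'"
  shows "add_measure M N' = add_measure M' N"
proof (rule measure_eqI)
  have fm1: "fm1 M" "fm1 N" "fm1 M'" "fm1 N'"
    using sm_decomp_fm1[OF d] sm_decomp_fm1[OF d'] by auto
  then show "sets (add_measure M N') = sets (add_measure M' N)"
    by (simp add: fm1D)
  fix A
  assume "A \<in> sets (add_measure M N')"
  then have "A \<in> sets borel"
    using fm1 by (simp add: fm1D)
  with d d' have "measure M A + measure N' A = measure M' A + measure N A"
    unfolding sm_decomp_def by (metis diff_add_eq eq_diff_eq)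
  then have "measure (add_measure M N') A = measure (add_measure M' N) A"
    using fm1 by (simp add: measure_add_measure fm1D)
  moreover have "finite_measure (add_measure M N')" "finite_measure (add_measure M' N)"
    using fm1 by (simp_all add: fm1_add_measure fm1D)
  ultimately show "emeasure (add_measure M N') A = emeasure (add_measure M' N) A"
    by (simp add: finite_measure.emeasure_eq_measure)
qed

lemma sm_integral_sm_decomp:
  assumes d: "sm_decomp \<mu> M N" and f: "lip1 f"
  shows "sm_integral \<mu> f = (\<integral>x. f x \<partial>M) - (\<integral>x. f x \<partial>N)"
proof -
  have independent: "(\<integral>x. f x \<partial>M') - (\<integral>x. f x \<partial>N') = (\<integral>x. f x \<partial>M) - (\<integral>x. f x \<partial>N)"
    if d': "sm_decomp \<mu> M' N'" for M' N'
  proof -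
    have "integral\<^sup>L (add_measure M N') f = integral\<^sup>L (add_measure M' N) f"
      by (simp add: sm_decomp_add_measure_eq[OF d d'])
    with sm_decomp_fm1[OF d] sm_decomp_fm1[OF d'] f show ?thesis
      by (simp add: integral_add_measure_lip1)
  qed
  show ?thesis
    unfolding sm_integral_def using d independent by (intro some_equality) blast+
qed

lemma sm_decomp_zero: "sm_decomp (\<lambda>A. 0) (null_measure borel) (null_measure borel)"
  by (auto simp: sm_decomp_def fm1_def finite_measureI)

lemma sm_decomp_uminus: "sm_decomp \<mu> M N \<Longrightarrow> sm_decomp (\<lambda>A. - \<mu> A) N M"
  by (auto simp: sm_decomp_def)

lemma sm_decomp_add:
  "sm_decomp \<mu> M N \<Longrightarrow> sm_decomp \<nu> M' N' \<Longrightarrow>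
    sm_decomp (\<lambda>A. \<mu> A + \<nu> A) (add_measure M M') (add_measure N N')"
  by (auto simp: sm_decomp_def fm1_add_measure measure_add_measure fm1D)

lemma sm_decomp_diff:
  "sm_decomp \<mu> M N \<Longrightarrow> sm_decomp \<nu> M' N' \<Longrightarrow>
    sm_decomp (\<lambda>A. \<mu> A - \<nu> A) (add_measure M N') (add_measure N M')"
  using sm_decomp_add[OF _ sm_decomp_uminus] by simp

lemma sm_decomp_scale:
  assumes "sm_decomp \<mu> M N" "0 \<le> c"
  shows "sm_decomp (\<lambda>A. c * \<mu> A) (density M (\<lambda>_. ennreal c)) (density N (\<lambda>_. ennreal c))"
  using assms
  by (auto simp: sm_decomp_def fm1_density_const measure_density_const fm1D right_diff_distrib)

lemma M1_diff: "\<mu> \<in> M1 \<Longrightarrow> \<nu> \<in> M1 \<Longrightarrow> (\<lambda>A. \<mu> A - \<nu> A) \<in> M1"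
  unfolding M1_def using sm_decomp_diff by blast

lemma M1_add: "\<mu> \<in> M1 \<Longrightarrow> \<nu> \<in> M1 \<Longrightarrow> (\<lambda>A. \<mu> A + \<nu> A) \<in> M1"
  unfolding M1_def using sm_decomp_add by blast

lemma M1_scale: "\<mu> \<in> M1 \<Longrightarrow> 0 \<le> c \<Longrightarrow> (\<lambda>A. c * \<mu> A) \<in> M1"
  unfolding M1_def using sm_decomp_scale by blast

lemma sm_integral_diff:
  assumes "\<mu> \<in> M1" "\<nu> \<in> M1" "lip1 f"
  shows "sm_integral (\<lambda>A. \<mu> A - \<nu> A) f = sm_integral \<mu> f - sm_integral \<nu> f"
proof -
  obtain M N M' N' where d: "sm_decomp \<mu> M N" and d': "sm_decomp \<nu> M' N'"
    using assms by (auto simp: M1_def)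
  show ?thesis
    using sm_decomp_fm1[OF d] sm_decomp_fm1[OF d'] \<open>lip1 f\<close>
    by (simp add: sm_integral_sm_decomp[OF sm_decomp_diff[OF d d']] sm_integral_sm_decomp[OF d]
        sm_integral_sm_decomp[OF d'] integral_add_measure_lip1)
qed

lemma sm_integral_add:
  assumes "\<mu> \<in> M1" "\<nu> \<in> M1" "lip1 f"
  shows "sm_integral (\<lambda>A. \<mu> A + \<nu> A) f = sm_integral \<mu> f + sm_integral \<nu> f"
proof -
  obtain M N M' N' where d: "sm_decomp \<mu> M N" and d': "sm_decomp \<nu> M' N'"
    using assms by (auto simp: M1_def)
  show ?thesis
    using sm_decomp_fm1[OF d] sm_decomp_fm1[OF d'] \<open>lip1 f\<close>
    by (simp add: sm_integral_sm_decomp[OF sm_decomp_add[OF d d']] sm_integral_sm_decomp[OF d]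
        sm_integral_sm_decomp[OF d'] integral_add_measure_lip1)
qed

lemma sm_integral_scale:
  assumes "\<mu> \<in> M1" "0 \<le> c" "lip1 f"
  shows "sm_integral (\<lambda>A. c * \<mu> A) f = c * sm_integral \<mu> f"
proof -
  obtain M N where d: "sm_decomp \<mu> M N"
    using assms by (auto simp: M1_def)
  show ?thesis
    using sm_decomp_fm1[OF d] assms
    by (simp add: sm_integral_sm_decomp[OF sm_decomp_scale[OF d]] sm_integral_sm_decomp[OF d]
        integral_density_const borel_measurable_lip1 measurable_fm1 right_diff_distrib)
qed

lemma abs_sm_integral_le_W1norm:
  assumes "\<mu> \<in> M1" "\<bar>f 0\<bar> \<le> 1" "lip1 f"
  shows "\<bar>sm_integral \<mu> f\<bar> \<le> W1norm \<mu>"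
proof -
  obtain M N where d: "sm_decomp \<mu> M N"
    using assms by (auto simp: M1_def)
  define B where "B = (\<integral>x. 1 + norm x \<partial>M) + (\<integral>x. 1 + norm x \<partial>N)"
  have "\<bar>sm_integral \<mu> g\<bar> \<le> B" if g: "\<bar>g 0\<bar> \<le> 1" "lip1 g" for g
  proof -
    have "\<bar>g x\<bar> \<le> 1 + norm x" for x
      using lip1_abs_le[OF g(2), of x] g(1) by linarith
    moreover have "integrable L (\<lambda>x. 1 + norm x)" "integrable L g" if "fm1 L" for L
      using that g(2) by (simp_all add: fm1D finite_measure.integrable_const integrable_lip1)
    ultimately have "\<bar>integral\<^sup>L L g\<bar> \<le> (\<integral>x. 1 + norm x \<partial>L)" if "fm1 L" for L
      using that by (intro integral_abs_bound_integral) auto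
    from this[of M] this[of N] sm_decomp_fm1[OF d] show ?thesis
      unfolding sm_integral_sm_decomp[OF d g(2)] B_def by linarith
  qed
  then show ?thesis
    unfolding W1norm_def using assms(2,3) by (intro cSup_upper bdd_aboveI[where M=B]) auto
qed

lemma lip1_divide:
  assumes "lip1 f" "1 \<le> c"
  shows "lip1 (\<lambda>x. f x / c)"
  unfolding lip1_def
proof (intro allI)
  fix x y
  have "\<bar>f x / c - f y / c\<bar> = \<bar>f x - f y\<bar> / c"
    using assms(2) by (simp add: diff_divide_distrib[symmetric])
  also have "\<dots> \<le> \<bar>f x - f y\<bar>"
    using assms(2) by (simp add: divide_le_eq mult_le_cancel_left1)
  also have "\<dots> \<le> dist x y"
    using assms(1) by (simp add: lip1_def)
  finally show "\<bar>f x / c - f y / c\<bar> \<le> dist x y" .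
qed

lemma abs_sm_integral_le_W1norm_lip1:
  assumes "\<mu> \<in> M1" "lip1 f"
  shows "\<bar>sm_integral \<mu> f\<bar> \<le> max 1 \<bar>f 0\<bar> * W1norm \<mu>"
proof -
  define c where "c = max 1 \<bar>f 0\<bar>"
  have c: "1 \<le> c" "\<bar>f 0 / c\<bar> \<le> 1"
    by (auto simp: c_def divide_le_eq_1)
  obtain M N where d: "sm_decomp \<mu> M N"
    using assms by (auto simp: M1_def)
  have "sm_integral \<mu> f = c * sm_integral \<mu> (\<lambda>x. f x / c)"
    using c by (simp add: sm_integral_sm_decomp[OF d] lip1_divide assms right_diff_distrib)
  also have "\<bar>\<dots>\<bar> \<le> c * W1norm \<mu>"
    using c assms by (simp add: abs_mult abs_sm_integral_le_W1norm lip1_divide)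
  finally show ?thesis
    by (simp add: c_def)
qed

section \<open>The cone\<close>

lemma coneC_sm_decomp_iff:
  assumes "sm_decomp \<mu> M N"
  shows "\<mu> \<in> coneC \<longleftrightarrow>
    (\<forall>f. lip1 f \<longrightarrow> (\<forall>x. 0 \<le> f x) \<longrightarrow> mono f \<longrightarrow> (\<integral>x. f x \<partial>N) \<le> (\<integral>x. f x \<partial>M))"
  using assms by (auto simp: coneC_def M1_def sm_integral_sm_decomp)

lemma zero_in_coneC: "(\<lambda>A. 0) \<in> coneC"
  using coneC_sm_decomp_iff[OF sm_decomp_zero] by simp

lemma coneC_add: "\<mu> \<in> coneC \<Longrightarrow> \<nu> \<in> coneC \<Longrightarrow> (\<lambda>A. \<mu> A + \<nu> A) \<in> coneC"
  by (simp add: coneC_def M1_add sm_integral_add)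

lemma coneC_scale: "0 \<le> c \<Longrightarrow> \<mu> \<in> coneC \<Longrightarrow> (\<lambda>A. c * \<mu> A) \<in> coneC"
  by (simp add: coneC_def M1_scale sm_integral_scale)

lemma coneC_convex:
  assumes "\<mu> \<in> coneC" "\<nu> \<in> coneC" "t \<in> {0..1}"
  shows "(\<lambda>A. t * \<mu> A + (1 - t) * \<nu> A) \<in> coneC"
  using assms by (intro coneC_add[OF coneC_scale coneC_scale]) auto

lemma coneC_W1_closed:
  fixes s :: "nat \<Rightarrow> (real^'n) set \<Rightarrow> real"
  assumes s: "\<And>k. s k \<in> coneC" and \<mu>: "\<mu> \<in> M1"
    and lim: "(\<lambda>k. W1norm (\<lambda>A. s k A - \<mu> A)) \<longlonglongrightarrow> 0"
  shows "\<mu> \<in> coneC"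
  unfolding coneC_def
proof (intro CollectI conjI allI impI)
  fix f :: "real^'n \<Rightarrow> real"
  assume "lip1 f \<and> (\<forall>x. 0 \<le> f x) \<and> mono f"
  then have f: "lip1 f" and f_nonneg_mono: "\<forall>x. 0 \<le> f x" "mono f"
    by auto
  have s_M1: "s k \<in> M1" for k
    using s by (simp add: coneC_def)
  have "(\<lambda>k. sm_integral (s k) f - sm_integral \<mu> f) \<longlonglongrightarrow> 0"
  proof (rule Lim_null_comparison)
    show "(\<lambda>k. max 1 \<bar>f 0\<bar> * W1norm (\<lambda>A. s k A - \<mu> A)) \<longlonglongrightarrow> 0"
      using tendsto_mult_right_zero[OF lim] .
    show "\<forall>\<^sub>F k in sequentially. norm (sm_integral (s k) f - sm_integral \<mu> f)
        \<le> max 1 \<bar>f 0\<bar> * W1norm (\<lambda>A. s k A - \<mu> A)"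
      using abs_sm_integral_le_W1norm_lip1[OF M1_diff[OF s_M1 \<mu>] f]
      by (intro always_eventually allI) (simp add: sm_integral_diff[OF s_M1 \<mu> f])
  qed
  then have "(\<lambda>k. sm_integral (s k) f) \<longlonglongrightarrow> sm_integral \<mu> f"
    by (rule LIM_zero_cancel)
  moreover have "0 \<le> sm_integral (s k) f" for k
    using s f f_nonneg_mono by (simp add: coneC_def)
  ultimately show "0 \<le> sm_integral \<mu> f"
    by (intro LIMSEQ_le_const) auto
qed (fact \<mu>)

section \<open>Upper sets\<close>

definition upper_set :: "'a::order set \<Rightarrow> bool" where
  "upper_set U \<longleftrightarrow> (\<forall>x\<in>U. \<forall>y. x \<le> y \<longrightarrow> y \<in> U)"

lemma infdist_upper_set_antimono:
  fixes F :: "(real^'n) set"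
  assumes F: "upper_set F" and "x \<le> y"
  shows "infdist y F \<le> infdist x F"
proof (cases "F = {}")
  case False
  have "infdist y F \<le> dist x a" if "a \<in> F" for a
  proof -
    have "a + (y - x) \<in> F"
      using F \<open>a \<in> F\<close> \<open>x \<le> y\<close> by (auto simp: upper_set_def less_eq_vec_def)
    then have "infdist y F \<le> dist y (a + (y - x))"
      by (rule infdist_le)
    then show ?thesis
      by (simp add: dist_norm algebra_simps)
  qed
  with False show ?thesis
    unfolding infdist_def by (auto intro: cINF_greatest)
qed (simp add: infdist_def)

lemma lip1_infdist_cutoff: "lip1 (\<lambda>x. max 0 (r - infdist x F))"
  unfolding lip1_def
proof (intro allI)
  fix x y
  show "\<bar>max 0 (r - infdist x F) - max 0 (r - infdist y F)\<bar> \<le> dist x y"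
    using infdist_triangle_abs[of x F y] by (auto simp: max_def abs_le_iff)
qed

lemma tendsto_infdist_cutoff_indicator:
  assumes "closed F" "F \<noteq> {}"
  shows "(\<lambda>k. real (Suc k) * max 0 (1 / real (Suc k) - infdist x F)) \<longlonglongrightarrow> indicator F x"
proof (cases "x \<in> F")
  case False
  with assms have "0 < infdist x F"
    by (simp add: infdist_pos_not_in_closed)
  then obtain k0 where k0: "1 / real (Suc k0) < infdist x F"
    using nat_approx_posE by blast
  have "1 / real (Suc k) \<le> 1 / real (Suc k0)" if "k0 \<le> k" for k
    using that by (simp add: frac_le)
  with k0 have "\<forall>k\<ge>k0. real (Suc k) * max 0 (1 / real (Suc k) - infdist x F) = 0"
    by force
  then have "\<forall>\<^sub>F k in sequentially. real (Suc k) * max 0 (1 / real (Suc k) - infdist x F) = 0"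
    unfolding eventually_sequentially by blast
  with False show ?thesis
    by (simp add: tendsto_eventually del: of_nat_Suc)
qed simp

lemma measure_closed_upper_set_le:
  fixes M N :: "(real^'n) measure"
  assumes M: "finite_measure M" "sets M = sets borel" and N: "finite_measure N" "sets N = sets borel"
    and le: "\<And>f. lip1 f \<Longrightarrow> (\<forall>x. 0 \<le> f x) \<Longrightarrow> mono f \<Longrightarrow> (\<integral>x. f x \<partial>M) \<le> (\<integral>x. f x \<partial>N)"
    and F: "closed F" "upper_set F"
  shows "measure M F \<le> measure N F"
proof (cases "F = {}")
  case False
  define g where "g k = (\<lambda>x. max 0 (1 / real (Suc k) - infdist x F))" for k
  have "mono (g k)" for k
    unfolding g_def mono_def using infdist_upper_set_antimono[OF F(2)]
    by (intro allI impI max.mono) auto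
  then have g: "lip1 (g k)" "mono (g k)" "\<forall>x. 0 \<le> g k x" for k
    by (simp_all add: g_def lip1_infdist_cutoff)
  have lim: "(\<lambda>k. \<integral>x. real (Suc k) * g k x \<partial>L) \<longlonglongrightarrow> measure L F"
    if "finite_measure L" "sets L = sets borel" for L :: "(real^'n) measure"
  proof -
    interpret finite_measure L
      by fact
    have "(\<lambda>k. \<integral>x. real (Suc k) * g k x \<partial>L) \<longlonglongrightarrow> (\<integral>x. indicator F x \<partial>L)"
    proof (rule integral_dominated_convergence[where w="\<lambda>_. 1"])
      show "AE x in L. (\<lambda>k. real (Suc k) * g k x) \<longlonglongrightarrow> indicator F x"
        using F False by (simp add: g_def tendsto_infdist_cutoff_indicator del: of_nat_Suc)
      show "AE x in L. norm (real (Suc k) * g k x) \<le> 1" for k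
      proof (intro AE_I2)
        fix x
        have "0 \<le> g k x" "g k x \<le> 1 / real (Suc k)"
          using infdist_nonneg[of x F] unfolding g_def by auto
        then show "norm (real (Suc k) * g k x) \<le> 1"
          by (auto simp: field_simps simp del: of_nat_Suc)
      qed
      show "indicator F \<in> borel_measurable L"
        using that F by (simp add: measurable_cong_sets[OF that(2) refl])
      show "(\<lambda>x. real (Suc k) * g k x) \<in> borel_measurable L" for k
        using borel_measurable_lip1[OF g(1)] by (simp add: measurable_cong_sets[OF that(2) refl])
    qed simp
    then show ?thesis
      using that F by (simp add: sets_eq_imp_space_eq)
  qed
  show ?thesis
    using g le by (intro LIMSEQ_le[OF lim[OF M] lim[OF N]]) auto
qed simp

lemma closed_upward_closure_compact:
  fixes K :: "(real^'n) set"
  assumes "compact K"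
  shows "closed {y. \<exists>x\<in>K. x \<le> y}"
proof -
  have "{y. \<exists>x\<in>K. x \<le> y} = (\<Union>x\<in>K. \<Union>z\<in>{z. \<forall>i. 0 \<le> z $ i}. {x + z})"
  proof safe
    fix x y assume "x \<in> K" "x \<le> y"
    then show "y \<in> (\<Union>x\<in>K. \<Union>z\<in>{z. \<forall>i. 0 \<le> z $ i}. {x + z})"
      by (intro UN_I[of x] UN_I[of "y - x"]) (auto simp: less_eq_vec_def)
  next
    fix x z :: "real^'n" assume "x \<in> K" "\<forall>i. 0 \<le> z $ i"
    then show "\<exists>x'\<in>K. x' \<le> x + z"
      by (intro bexI[of _ x]) (auto simp: less_eq_vec_def)
  qed
  moreover have "closed {z :: real^'n. \<forall>i. 0 \<le> z $ i}"
    by (intro closed_Collect_all closed_Collect_le continuous_intros)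
  ultimately show ?thesis
    using compact_closed_sums[OF assms] by simp
qed

lemma measure_upper_set_le:
  fixes M N :: "(real^'n) measure"
  assumes M: "finite_measure M" "sets M = sets borel" and N: "finite_measure N" "sets N = sets borel"
    and le: "\<And>f. lip1 f \<Longrightarrow> (\<forall>x. 0 \<le> f x) \<Longrightarrow> mono f \<Longrightarrow> (\<integral>x. f x \<partial>M) \<le> (\<integral>x. f x \<partial>N)"
    and U: "U \<in> sets borel" "upper_set U"
  shows "measure M U \<le> measure N U"
proof (rule ccontr)
  interpret M: finite_measure M by fact
  interpret N: finite_measure N by fact
  assume "\<not> ?thesis"
  then have "ennreal (measure N U) < emeasure M U"
    by (simp add: M.emeasure_eq_measure ennreal_less_iff)
  also have "emeasure M U = (SUP K \<in> {K. K \<subseteq> U \<and> compact K}. emeasure M K)"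
    using M U by (intro inner_regular) auto
  finally obtain K where K: "K \<subseteq> U" "compact K" and "ennreal (measure N U) < emeasure M K"
    by (auto simp: less_SUP_iff)
  then have less: "measure N U < measure M K"
    by (simp add: M.emeasure_eq_measure ennreal_less_iff)
  define F where "F = {y. \<exists>x\<in>K. x \<le> y}"
  have F: "closed F" "upper_set F" "K \<subseteq> F" "F \<subseteq> U"
    using closed_upward_closure_compact[OF K(2)] K(1) U(2)
    by (auto simp: F_def upper_set_def intro: order_trans)
  have "measure M K \<le> measure M F"
    using F M by (intro M.finite_measure_mono) auto
  also have "\<dots> \<le> measure N F"
    by (rule measure_closed_upper_set_le[OF M N le F(1,2)])
  also have "\<dots> \<le> measure N U"
    using F U N by (intro N.finite_measure_mono) auto
  finally show False
    using less by simp
qed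

lemma Int_stable_atMost_vec: "Int_stable (range (\<lambda>a::real^'n. {..a}))"
proof (rule Int_stableI)
  fix A B assume "A \<in> range (\<lambda>a::real^'n. {..a})" "B \<in> range (\<lambda>a::real^'n. {..a})"
  then obtain a b where "A = {..a}" "B = {..b}"
    by auto
  moreover have "{..a} \<inter> {..b} = {..(\<chi> i. min (a $ i) (b $ i))}"
    by (auto simp: less_eq_vec_def)
  ultimately show "A \<inter> B \<in> range (\<lambda>a. {..a})"
    by auto
qed

lemma UN_atMost_const_vec: "(\<Union>i::nat. {..(\<chi> j. real i)}) = (UNIV :: (real^'n) set)"
proof (safe; simp)
  fix x :: "real^'n"
  have "x $ j \<le> real (nat \<lceil>norm x\<rceil>)" for j
    using component_le_norm_cart[of x j] real_nat_ceiling_ge[of "norm x"] by linarith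
  then show "\<exists>i. x \<le> (\<chi> j. real i)"
    by (intro exI[of _ "nat \<lceil>norm x\<rceil>"]) (simp add: less_eq_vec_def)
qed

lemma measure_eqI_upper_sets:
  fixes M N :: "(real^'n) measure"
  assumes M: "finite_measure M" "sets M = sets borel" and N: "finite_measure N" "sets N = sets borel"
    and eq: "\<And>U. U \<in> sets borel \<Longrightarrow> upper_set U \<Longrightarrow> measure M U = measure N U"
  shows "M = N"
proof -
  interpret M: finite_measure M by fact
  interpret N: finite_measure N by fact
  let ?E = "range (\<lambda>a::real^'n. {..a})"
  have sets_E: "sets (borel :: (real^'n) measure) = sigma_sets UNIV ?E"
    by (subst borel_eq_atMost) simp
  show ?thesis
  proof (rule measure_eqI_generator_eq[where E="?E" and \<Omega>=UNIV and A="\<lambda>i. {..(\<chi> j. real i)}"])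
    fix X assume "X \<in> ?E"
    then obtain a where X: "X = {..a}"
      by auto
    have "- X \<in> sets borel" "upper_set (- X)" "upper_set (UNIV :: (real^'n) set)"
      using X by (auto simp: upper_set_def dest: order_trans)
    with eq have "measure M X = measure N X"
      using M N M.finite_measure_compl[of "- X"] N.finite_measure_compl[of "- X"]
      by (simp add: sets_eq_imp_space_eq)
    then show "emeasure M X = emeasure N X"
      by (simp add: M.emeasure_eq_measure N.emeasure_eq_measure)
  qed (use M N sets_E Int_stable_atMost_vec UN_atMost_const_vec in auto)
qed

lemma coneC_pointed: "coneC \<inter> (\<lambda>\<mu> A. - \<mu> A) ` coneC = {\<lambda>A. 0}"
proof safe
  fix \<mu> :: "(real^'n) set \<Rightarrow> real"
  assume "(\<lambda>A. - \<mu> A) \<in> coneC" "\<mu> \<in> coneC"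
  moreover obtain M N where d: "sm_decomp \<mu> M N"
    using \<open>\<mu> \<in> coneC\<close> by (auto simp: coneC_def M1_def)
  ultimately have "(\<integral>x. f x \<partial>M) = (\<integral>x. f x \<partial>N)"
    if "lip1 f" "\<forall>x. 0 \<le> f x" "mono f" for f
    using that coneC_sm_decomp_iff[OF d] coneC_sm_decomp_iff[OF sm_decomp_uminus[OF d]]
    by (meson order_antisym)
  then have "M = N"
    using sm_decomp_fm1[OF d]
    by (intro measure_eqI_upper_sets order_antisym measure_upper_set_le) (auto simp: fm1D)
  with d show "(\<lambda>A. - \<mu> A) = (\<lambda>A. 0)"
    by (auto simp: sm_decomp_def)
next
  show "(\<lambda>A. 0) \<in> (\<lambda>\<mu> A. - \<mu> A) ` coneC"
    using zero_in_coneC by (intro image_eqI[of _ _ "\<lambda>A. 0"]) auto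
qed (fact zero_in_coneC)

section \<open>Stochastic order\<close>

lemma sum_of_bool_le_eq_floor:
  assumes "0 \<le> y" "y \<le> real N"
  shows "(\<Sum>j\<in>{1..N}. of_bool (real j \<le> y)) = (of_int \<lfloor>y\<rfloor> :: real)"
proof -
  have "{1..N} \<inter> {j. real j \<le> y} = {1..nat \<lfloor>y\<rfloor>}"
    using assms by (auto simp: le_nat_iff le_floor_iff floor_le_iff)
  then show ?thesis
    using assms by simp
qed

lemma level_sum_approx:
  assumes "0 < n" "0 \<le> y" "real n * y \<le> real N"
  shows "(\<Sum>j\<in>{1..N}. of_bool (real j \<le> real n * y)) / real n \<le> y"
    and "y \<le> (\<Sum>j\<in>{1..N}. of_bool (real j \<le> real n * y)) / real n + 1 / real n"
proof -
  have sum: "(\<Sum>j\<in>{1..N}. of_bool (real j \<le> real n * y)) = (of_int \<lfloor>real n * y\<rfloor> :: real)"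
    using assms by (intro sum_of_bool_le_eq_floor) auto
  show "(\<Sum>j\<in>{1..N}. of_bool (real j \<le> real n * y)) / real n \<le> y"
    unfolding sum using assms(1) by (simp add: divide_le_eq mult.commute)
  show "y \<le> (\<Sum>j\<in>{1..N}. of_bool (real j \<le> real n * y)) / real n + 1 / real n"
    unfolding sum using assms(1) by (simp add: add_divide_distrib[symmetric] le_divide_eq mult.commute)
qed

lemma integrable_bounded_borel:
  fixes f :: "'a::topological_space \<Rightarrow> real"
  assumes "finite_measure L" "sets L = sets borel" "f \<in> borel_measurable borel" "\<And>x. \<bar>f x\<bar> \<le> B"
  shows "integrable L f"
proof (rule finite_measure.integrable_const_bound[where B=B])
  show "f \<in> borel_measurable L"
    using assms(3) by (simp add: measurable_cong_sets[OF assms(2) refl])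
qed (use assms in simp_all)

lemma integral_le_of_upper_sets:
  fixes \<mu> \<nu> :: "(real^'n) measure" and g :: "real^'n \<Rightarrow> real"
  assumes \<mu>: "prob_space \<mu>" "sets \<mu> = sets borel" and \<nu>: "prob_space \<nu>" "sets \<nu> = sets borel"
    and le: "\<And>U. U \<in> sets borel \<Longrightarrow> upper_set U \<Longrightarrow> measure \<mu> U \<le> measure \<nu> U"
    and g: "g \<in> borel_measurable borel" "mono g" "\<And>x. 0 \<le> g x" "\<And>x. g x \<le> C"
    and n: "0 < n"
  shows "(\<integral>x. g x \<partial>\<mu>) \<le> (\<integral>x. g x \<partial>\<nu>) + 1 / real n"
proof -
  interpret \<mu>: prob_space \<mu>
    by (rule \<mu>(1))
  define N where "N = nat \<lceil>real n * C\<rceil>"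
  define U where "U j = {x. real j \<le> real n * g x}" for j :: nat
  \<comment> \<open>the step function \<open>\<lfloor>n g\<rfloor> / n\<close>, written as a sum over the upper level sets of \<open>g\<close>\<close>
  define s where "s = (\<lambda>x. (\<Sum>j\<in>{1..N}. indicator (U j) x) / real n)"
  have U: "U j \<in> sets borel" "upper_set (U j)" for j
    using g(1,2) n by (auto simp: U_def upper_set_def mono_def intro: order_trans)
  have "real n * g x \<le> real N" for x
    using mult_left_mono[OF g(4)[of x], of "real n"] real_nat_ceiling_ge[of "real n * C"]
    by (simp add: N_def)
  then have s: "s x \<le> g x" "g x \<le> s x + 1 / real n" for x
    using level_sum_approx[OF n g(3)] by (simp_all add: s_def U_def indicator_def)
  have integral_s: "integrable L s" "(\<integral>x. s x \<partial>L) = (\<Sum>j\<in>{1..N}. measure L (U j)) / real n"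
    if "prob_space L" "sets L = sets borel" for L :: "(real^'n) measure"
  proof -
    interpret prob_space L by fact
    have "integrable L (indicator (U j) :: _ \<Rightarrow> real)" for j
      using U that(2) by (intro integrable_real_indicator) (auto simp: less_top[symmetric])
    moreover have "space L = UNIV"
      using that(2) sets_eq_imp_space_eq by force
    ultimately show "integrable L s" "(\<integral>x. s x \<partial>L) = (\<Sum>j\<in>{1..N}. measure L (U j)) / real n"
      by (auto simp: s_def)
  qed
  have integrable_g: "integrable L g" if "prob_space L" "sets L = sets borel" for L :: "(real^'n) measure"
    using that g by (intro integrable_bounded_borel[where B=C] prob_space.finite_measure) auto
  have "(\<integral>x. g x \<partial>\<mu>) \<le> (\<integral>x. s x + 1 / real n \<partial>\<mu>)"
    using \<mu> s by (intro integral_mono integrable_g integral_s Bochner_Integration.integrable_add) auto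
  also have "\<dots> = (\<integral>x. s x \<partial>\<mu>) + 1 / real n"
    using integral_s(1)[OF \<mu>] by (simp add: \<mu>.prob_space)
  also have "(\<integral>x. s x \<partial>\<mu>) \<le> (\<integral>x. s x \<partial>\<nu>)"
    unfolding integral_s(2)[OF \<mu>] integral_s(2)[OF \<nu>]
    using n U by (intro divide_right_mono sum_mono le) auto
  also have "(\<integral>x. s x \<partial>\<nu>) \<le> (\<integral>x. g x \<partial>\<nu>)"
    using \<nu> s by (intro integral_mono integrable_g integral_s) auto
  finally show ?thesis
    by simp
qed

lemma st_le_of_upper_sets:
  fixes \<mu> \<nu> :: "(real^'n) measure"
  assumes \<mu>: "prob_space \<mu>" "sets \<mu> = sets borel" and \<nu>: "prob_space \<nu>" "sets \<nu> = sets borel"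
    and le: "\<And>U. U \<in> sets borel \<Longrightarrow> upper_set U \<Longrightarrow> measure \<mu> U \<le> measure \<nu> U"
  shows "st_le \<mu> \<nu>"
  unfolding st_le_def
proof (intro allI impI, elim conjE)
  interpret \<mu>: prob_space \<mu>
    by (rule \<mu>(1))
  interpret \<nu>: prob_space \<nu>
    by (rule \<nu>(1))
  fix f :: "real^'n \<Rightarrow> real"
  assume f: "f \<in> borel_measurable borel" "bounded (range f)" "mono f"
  then obtain B where B: "\<And>x. \<bar>f x\<bar> \<le> B"
    unfolding bounded_real by auto
  \<comment> \<open>shifting by \<open>B\<close> makes \<open>f\<close> nonnegative without changing the difference of the integrals\<close>
  have "0 \<le> f x + B" "f x + B \<le> 2 * B" for x
    using B[of x] by linarith+
  then have "(\<integral>x. f x + B \<partial>\<mu>) \<le> (\<integral>x. f x + B \<partial>\<nu>) + 1 / real n" if "0 < n" for n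
    using f that by (intro integral_le_of_upper_sets[OF \<mu> \<nu> le, where C="2 * B"]) (auto simp: mono_def)
  moreover have "integrable \<mu> f" "integrable \<nu> f"
    using integrable_bounded_borel[OF _ _ f(1) B] \<mu>(2) \<nu>(2) \<mu>.finite_measure_axioms
      \<nu>.finite_measure_axioms by blast+
  ultimately have bound: "(\<integral>x. f x \<partial>\<mu>) \<le> (\<integral>x. f x \<partial>\<nu>) + 1 / real n" if "0 < n" for n
    using that by (simp add: \<mu>.prob_space \<nu>.prob_space)
  show "(\<integral>x. f x \<partial>\<mu>) \<le> (\<integral>x. f x \<partial>\<nu>)"
  proof (rule field_le_epsilon)
    fix e :: real
    assume "0 < e"
    then obtain n :: nat where "0 < n" "1 / real n < e"
      using ex_inverse_of_nat_less by (auto simp: inverse_eq_divide)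
    with bound show "(\<integral>x. f x \<partial>\<mu>) \<le> (\<integral>x. f x \<partial>\<nu>) + e"
      by (smt (verit))
  qed
qed

lemma integral_lip1_le_of_st_le:
  fixes \<mu> \<nu> :: "(real^'n) measure"
  assumes "fm1 \<mu>" "fm1 \<nu>" "st_le \<mu> \<nu>" and f: "lip1 f" "\<forall>x. 0 \<le> f x" "mono f"
  shows "(\<integral>x. f x \<partial>\<mu>) \<le> (\<integral>x. f x \<partial>\<nu>)"
proof -
  define h where "h k = (\<lambda>x. min (f x) (real k))" for k :: nat
  have "mono (h k)" for k
    using f(3) unfolding h_def mono_def by (intro allI impI min.mono) auto
  moreover have "h k \<in> borel_measurable borel" "bounded (range (h k))" for k
    using f borel_measurable_lip1[OF f(1)]
    by (auto simp: h_def bounded_real intro!: exI[of _ "real k"])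
  ultimately have h: "h k \<in> borel_measurable borel" "bounded (range (h k))" "mono (h k)" for k
    by blast+
  have lim: "(\<lambda>k. \<integral>x. h k x \<partial>L) \<longlonglongrightarrow> (\<integral>x. f x \<partial>L)" if L: "fm1 L" for L
  proof (rule integral_dominated_convergence[where w=f])
    show "f \<in> borel_measurable L" "h k \<in> borel_measurable L" for k
      using borel_measurable_lip1[OF f(1)] h(1) by (simp_all add: measurable_fm1[OF L])
    show "integrable L f"
      using L f(1) by (rule integrable_lip1)
    show "AE x in L. norm (h k x) \<le> f x" for k
      using f(2) by (simp add: h_def)
    show "AE x in L. (\<lambda>k. h k x) \<longlonglongrightarrow> f x"
    proof (intro AE_I2)
      fix x
      have "\<forall>\<^sub>F k in sequentially. h k x = f x"
        unfolding h_def eventually_sequentially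
        by (intro exI[of _ "nat \<lceil>f x\<rceil>"]) (auto intro!: min_absorb1 order_trans[OF real_nat_ceiling_ge])
      then show "(\<lambda>k. h k x) \<longlonglongrightarrow> f x"
        by (rule tendsto_eventually)
    qed
  qed
  show ?thesis
    using assms(3) h unfolding st_le_def by (intro LIMSEQ_le[OF lim lim] assms) auto
qed

lemma P1_fm1: "P1 M \<Longrightarrow> fm1 M"
  by (auto simp: P1_def fm1_def prob_space_def)

lemma sm_decomp_sm_of: "fm1 M \<Longrightarrow> fm1 N \<Longrightarrow> sm_decomp (\<lambda>A. sm_of M A - sm_of N A) M N"
  by (auto simp: sm_decomp_def sm_of_def)

lemma st_le_iff_coneC:
  fixes \<mu> \<nu> :: "(real^'n) measure"
  assumes "P1 \<mu>" "P1 \<nu>"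
  shows "st_le \<mu> \<nu> \<longleftrightarrow> (\<lambda>A. sm_of \<nu> A - sm_of \<mu> A) \<in> coneC"
proof -
  have fm1: "fm1 \<mu>" "fm1 \<nu>"
    using assms by (simp_all add: P1_fm1)
  have "st_le \<mu> \<nu>" if "(\<lambda>A. sm_of \<nu> A - sm_of \<mu> A) \<in> coneC"
    using that assms fm1
    by (intro st_le_of_upper_sets measure_upper_set_le)
      (auto simp: coneC_sm_decomp_iff[OF sm_decomp_sm_of[OF fm1(2,1)]] P1_def fm1D)
  then show ?thesis
    using fm1 integral_lip1_le_of_st_le[OF fm1]
    by (auto simp: coneC_sm_decomp_iff[OF sm_decomp_sm_of[OF fm1(2,1)]])
qed

theorem lemma3p5:
  shows "(\<forall>(s :: nat \<Rightarrow> (real^'n) set \<Rightarrow> real) \<mu>.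
            (\<forall>k. s k \<in> coneC) \<longrightarrow> \<mu> \<in> M1 \<longrightarrow>
            (\<lambda>k. W1norm (\<lambda>A. s k A - \<mu> A)) \<longlonglongrightarrow> 0 \<longrightarrow> \<mu> \<in> coneC)
    \<and> (\<forall>\<mu> \<in> (coneC :: ((real^'n) set \<Rightarrow> real) set). \<forall>\<nu> \<in> coneC. \<forall>t \<in> {0..1::real}.
            (\<lambda>A. t * \<mu> A + (1 - t) * \<nu> A) \<in> coneC)
    \<and> (\<forall>c > (0::real). \<forall>\<mu> \<in> (coneC :: ((real^'n) set \<Rightarrow> real) set). (\<lambda>A. c * \<mu> A) \<in> coneC)
    \<and> (coneC \<inter> (\<lambda>\<mu> A. - \<mu> A) ` coneC = {(\<lambda>A. 0) :: (real^'n) set \<Rightarrow> real})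
    \<and> (\<forall>\<mu> \<nu> :: (real^'n) measure. P1 \<mu> \<longrightarrow> P1 \<nu> \<longrightarrow>
            (st_le \<mu> \<nu> \<longleftrightarrow> (\<lambda>A. sm_of \<nu> A - sm_of \<mu> A) \<in> coneC))"
  using coneC_W1_closed coneC_convex coneC_scale[OF less_imp_le] coneC_pointed st_le_iff_coneC
  by blast

end
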